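(* Let $n\ge 0$ and let $\alpha$ be a word of length $2^n$ over $\{0,1\}$. If $i_1^{(n)}i_2^{(n)}\alpha\in\mathcal{L}^*(E_{\mathbb{Z}})$ or $\alpha\, i_1^{(n)}i_2^{(n)}\in\mathcal{L}^*(E_{\mathbb{Z}})$ for some $i_1,i_2\in\{0,1\}$, then $\alpha=i^{(n)}$ for some $i\in\{0,1\}$.
   Context: The two-sided Thue--Morse sequence $\omega=(\omega_k)_{k\in\mathbb{Z}}$ over $\{0,1\}$ is defined by $\omega_0=0$, $\omega_{2^n+j}=1-\omega_j$ for $n\ge0$, $0\le j<2^n$, and $\omega_{-i}=\omega_{i-1}$ for $i\ge1$. $\mathcal{L}^*(E_{\mathbb{Z}})$ denotes the set of finite nonempty words $\omega_m\omega_{m+1}\cdots\omega_n$ ($m\le n$) occurring in $\omega$. Blocks $i^{(n)}$: $0^{(0)}=0$, $1^{(0)}=1$, and inductively $0^{(n)}=0^{(n-1)}1^{(n-1)}$, $1^{(n)}=1^{(n-1)}0^{(n-1)}$ (concatenation); $|i^{(n)}|=2^n$. *)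

theory Defs
  imports Main
begin

text \<open>One-sided Thue--Morse sequence: omega_0 = 0 and omega_(2^n + j) = 1 - omega_j
  for 0 <= j < 2^n. For k >= 1, the unique such n is the largest n with 2^n <= k.\<close>
function tm :: "nat \<Rightarrow> nat" where
  "tm k = (if k = 0 then 0
           else 1 - tm (k - 2 ^ (GREATEST n. 2 ^ n \<le> k)))"
  by auto
termination
proof (relation "measure id")
  fix k :: nat
  assume "k \<noteq> 0"
  hence "2 ^ 0 \<le> k" by simp
  moreover have "\<forall>n. 2 ^ n \<le> k \<longrightarrow> n \<le> k"
    by (metis le_trans less_exp less_imp_le_nat)
  ultimately have "2 ^ (GREATEST n. 2 ^ n \<le> k) \<le> k"
    by (metis (no_types, lifting) GreatestI_nat)
  moreover have "(0::nat) < 2 ^ (GREATEST n. 2 ^ n \<le> k)" by simp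
  ultimately show "(k - 2 ^ (GREATEST n. 2 ^ n \<le> k), k) \<in> measure id"
    using \<open>k \<noteq> 0\<close> by simp
qed simp

declare tm.simps [simp del]

definition tmZ :: "int \<Rightarrow> nat" where
  "tmZ k = (if k \<ge> 0 then tm (nat k) else tm (nat (- k - 1)))"

definition tm_language :: "nat list set" where
  "tm_language = {map tmZ [m..n] | m n. m \<le> n}"

fun block :: "nat \<Rightarrow> nat \<Rightarrow> nat list" where
  "block i 0 = [i]"
| "block i (Suc n) = block i n @ block (1 - i) n"

end

theory Submission imports Defs begin

text \<open>Every factor of the two-sided sequence already occurs in the one-sided one, so the
  hypothesis places two consecutive length-\<open>2^n\<close> blocks at some position \<open>m\<close> of
  \<open>tm\<close>. The factors of length \<open>2^n\<close> starting at multiples of \<open>2^n\<close> are exactly blocks;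
  conversely, if the factors at \<open>m\<close> and \<open>m + 2^n\<close> are both blocks then \<open>2^n\<close> divides \<open>m\<close>.
  This is proved by induction on \<open>n\<close>: halving the two blocks yields four consecutive
  aligned blocks of length \<open>2^(n-1)\<close> at \<open>2^(n-1) q\<close>, whose types switch between \<open>q\<close>
  and \<open>q+1\<close> and between \<open>q+2\<close> and \<open>q+3\<close>; for odd \<open>q\<close> this would produce a cube
  \<open>tm p = tm (p+1) = tm (p+2)\<close>. Hence \<open>\<alpha>\<close>, adjacent to the two blocks, is itself aligned
  and therefore a block.\<close>

definition tm_factor :: "nat \<Rightarrow> nat \<Rightarrow> nat list" where
  "tm_factor m l = map tm [m..<m + l]"

lemma tm_le_1: "tm k \<le> 1"
  by (subst tm.simps) auto

lemma tm_0_or_1: "tm k = 0 \<or> tm k = 1"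
  using tm_le_1[of k] by linarith

lemma tm_0 [simp]: "tm 0 = 0"
  by (subst tm.simps) simp

lemma Greatest_pow_le_pow_add:
  assumes "j < 2 ^ N"
  shows "(GREATEST n. (2::nat) ^ n \<le> 2 ^ N + j) = N"
proof (rule Greatest_equality)
  fix y assume "(2::nat) ^ y \<le> 2 ^ N + j"
  with assms have "(2::nat) ^ y < 2 ^ Suc N" by simp
  then show "y \<le> N" using power_less_imp_less_exp[of "2::nat" y "Suc N"] by simp
qed simp

lemma tm_pow_add: "j < 2 ^ N \<Longrightarrow> tm (2 ^ N + j) = 1 - tm j"
  by (subst tm.simps) (simp add: Greatest_pow_le_pow_add)

lemma tm_double: "tm (2 * k) = tm k \<and> tm (2 * k + 1) = 1 - tm k"
proof (induction k rule: less_induct)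
  case (less k)
  show ?case
  proof (cases "k = 0")
    case True
    then show ?thesis using tm_pow_add[of 0 0] by simp
  next
    case False
    then obtain N where N: "2 ^ N \<le> k" "k < 2 ^ (N + 1)"
      using ex_power_ivl1[of 2 k] by auto
    define j where "j = k - 2 ^ N"
    have k: "k = 2 ^ N + j" "j < 2 ^ N" using N j_def by auto
    have "j < k" using k by simp
    have "tm (2 * k) = 1 - tm j"
      using tm_pow_add[of "2 * j" "Suc N"] less[OF \<open>j < k\<close>] k by simp
    moreover have "tm (2 * k + 1) = tm j"
      using tm_pow_add[of "2 * j + 1" "Suc N"] less[OF \<open>j < k\<close>] k tm_le_1[of j] by simp
    moreover have "tm k = 1 - tm j" using k tm_pow_add by simp
    ultimately show ?thesis using tm_le_1[of j] by simp
  qed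
qed

lemma tm_mult_pow_add: "r < 2 ^ n \<Longrightarrow> tm (2 ^ n * q + r) = (tm q + tm r) mod 2"
proof (induction n arbitrary: q r)
  case 0
  then show ?case using tm_0_or_1[of q] by auto
next
  case (Suc n)
  show ?case
  proof (cases "r < 2 ^ n")
    case True
    have "tm (2 ^ Suc n * q + r) = tm (2 ^ n * (2 * q) + r)"
      by (simp add: mult.assoc mult.left_commute)
    also have "\<dots> = (tm q + tm r) mod 2" using Suc.IH[OF True] tm_double by simp
    finally show ?thesis .
  next
    case False
    define r' where "r' = r - 2 ^ n"
    have r: "r = 2 ^ n + r'" "r' < 2 ^ n" using False Suc.prems r'_def by auto
    have "tm (2 ^ Suc n * q + r) = tm (2 ^ n * (2 * q + 1) + r')"
      using r by (simp add: algebra_simps)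
    also have "\<dots> = (tm (2 * q + 1) + tm r') mod 2" by (rule Suc.IH[OF r(2)])
    also have "\<dots> = (1 - tm q + tm r') mod 2" using tm_double[of q] by simp
    also have "\<dots> = (tm q + tm r) mod 2"
      using r tm_pow_add[of r' n] tm_0_or_1[of q] tm_0_or_1[of r'] by auto
    finally show ?thesis .
  qed
qed

lemma tm_reflect: "j < 2 ^ N \<Longrightarrow> tm (2 ^ N - 1 - j) = (N + tm j) mod 2"
proof (induction N arbitrary: j)
  case 0
  then show ?case by simp
next
  case (Suc N)
  show ?case
  proof (cases "j < 2 ^ N")
    case True
    have "2 ^ Suc N - 1 - j = 2 ^ N + (2 ^ N - 1 - j)" using True by simp
    then have "tm (2 ^ Suc N - 1 - j) = 1 - (N + tm j) mod 2"
      using tm_pow_add[of "2 ^ N - 1 - j" N] Suc.IH[OF True] True by simp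
    then show ?thesis by (simp add: mod_Suc)
  next
    case False
    define j' where "j' = j - 2 ^ N"
    have j: "j = 2 ^ N + j'" "j' < 2 ^ N" using False Suc.prems j'_def by auto
    have "2 ^ Suc N - 1 - j = 2 ^ N - 1 - j'" using j by simp
    then have "tm (2 ^ Suc N - 1 - j) = (N + tm j') mod 2" using Suc.IH[OF j(2)] by simp
    moreover have "tm j = 1 - tm j'" using j tm_pow_add by simp
    ultimately show ?thesis using tm_0_or_1[of j'] by (elim disjE) simp_all
  qed
qed

lemma tm_no_cube: "\<not> (tm p = tm (p + 1) \<and> tm (p + 1) = tm (p + 2))"
proof (cases "even p")
  case True
  then obtain s where "p = 2 * s" by blast
  then show ?thesis using tm_double[of s] tm_0_or_1[of s] by auto
next
  case False
  then obtain s where "p = 2 * s + 1" using oddE by blast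
  then have "p + 1 = 2 * (s + 1)" "p + 2 = 2 * (s + 1) + 1" by simp_all
  then show ?thesis using tm_double[of "s + 1"] tm_0_or_1[of "s + 1"] by auto
qed

text \<open>For odd \<open>q = 2p + 1\<close> the two switches force \<open>tm p = tm (p+1) = tm (p+2)\<close>.\<close>

lemma even_if_tm_switches:
  assumes "tm (q + 1) \<noteq> tm q" and "tm (q + 3) \<noteq> tm (q + 2)"
  shows "even q"
proof (rule ccontr)
  assume "odd q"
  then obtain p where q: "q = 2 * p + 1" using oddE by blast
  have "q + 1 = 2 * (p + 1)" "q + 2 = 2 * (p + 1) + 1" "q + 3 = 2 * (p + 2)" using q by auto
  then have "tm q = 1 - tm p" "tm (q + 1) = tm (p + 1)"
    "tm (q + 2) = 1 - tm (p + 1)" "tm (q + 3) = tm (p + 2)"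
    using q tm_double by metis+
  then have "tm p = tm (p + 1) \<and> tm (p + 1) = tm (p + 2)"
    using assms tm_0_or_1[of p] tm_0_or_1[of "p + 1"] tm_0_or_1[of "p + 2"] by auto
  then show False using tm_no_cube by blast
qed

lemma length_block [simp]: "length (block i n) = 2 ^ n"
  by (induction n arbitrary: i) auto

lemma block_not_Nil: "block i n \<noteq> []"
  by (induction n arbitrary: i) auto

lemma hd_block: "hd (block i n) = i"
  by (induction n arbitrary: i) (simp_all add: block_not_Nil)

lemma block_eq_block_iff: "block i n = block j n \<longleftrightarrow> i = j"
  using hd_block by metis

lemma tm_factor_add: "tm_factor m (k + l) = tm_factor m k @ tm_factor (m + k) l"
  unfolding tm_factor_def add.assoc[symmetric] using upt_add_eq_append[of m "m + k" l] by simp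

lemma tm_factor_eq_append_iff:
  assumes "length u = k" and "length v = l"
  shows "tm_factor m (k + l) = u @ v \<longleftrightarrow> tm_factor m k = u \<and> tm_factor (m + k) l = v"
  unfolding tm_factor_add by (rule append_eq_append_conv) (simp add: tm_factor_def assms)

lemma tm_factor_eq_append3_iff:
  assumes "length u = l" and "length v = l" and "length w = l"
  shows "tm_factor m (l + (l + l)) = u @ v @ w \<longleftrightarrow>
    tm_factor m l = u \<and> tm_factor (m + l) l = v \<and> tm_factor (m + l + l) l = w"
  using tm_factor_eq_append_iff[of u l "v @ w" "l + l" m] tm_factor_eq_append_iff[of v l w l "m + l"]
    assms by simp

lemma tm_factor_block_halves:
  assumes "tm_factor m (2 ^ Suc n) = block i (Suc n)"
  shows "tm_factor m (2 ^ n) = block i n" and "tm_factor (m + 2 ^ n) (2 ^ n) = block (1 - i) n"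
  using assms tm_factor_eq_append_iff[of "block i n" "2 ^ n" "block (1 - i) n" "2 ^ n" m]
  by (simp_all add: mult_2)

lemma tm_factor_aligned: "tm_factor (2 ^ n * q) (2 ^ n) = block (tm q) n"
proof (induction n arbitrary: q)
  case 0
  then show ?case by (simp add: tm_factor_def)
next
  case (Suc n)
  have "2 ^ Suc n * q = 2 ^ n * (2 * q)" "(2::nat) ^ Suc n = 2 ^ n + 2 ^ n"
    "2 ^ n * (2 * q) + 2 ^ n = 2 ^ n * (2 * q + 1)"
    by (simp_all add: algebra_simps)
  then have "tm_factor (2 ^ Suc n * q) (2 ^ Suc n)
      = tm_factor (2 ^ n * (2 * q)) (2 ^ n) @ tm_factor (2 ^ n * (2 * q + 1)) (2 ^ n)"
    by (simp only: tm_factor_add)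
  also have "\<dots> = block (tm q) n @ block (1 - tm q) n"
    using Suc.IH[of "2 * q"] Suc.IH[of "2 * q + 1"] tm_double[of q] by simp
  finally show ?case by simp
qed

lemma two_blocks_aligned:
  assumes "tm_factor m (2 ^ n) = block i n" and "tm_factor (m + 2 ^ n) (2 ^ n) = block j n"
  shows "2 ^ n dvd m"
  using assms
proof (induction n arbitrary: m i j)
  case (Suc n)
  have "m + 2 ^ Suc n = m + 2 ^ n + 2 ^ n" by simp
  note b = tm_factor_block_halves[OF Suc.prems(1)]
    tm_factor_block_halves[OF Suc.prems(2)[unfolded this]]
  obtain q where m: "m = 2 ^ n * q" using Suc.IH[OF b(1,2)] by blast
  have e: "2 ^ n * (q + 1) = m + 2 ^ n" "2 ^ n * (q + 2) = m + 2 ^ n + 2 ^ n"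
    "2 ^ n * (q + 3) = m + 2 ^ n + 2 ^ n + 2 ^ n" using m by (simp_all add: algebra_simps)
  have "tm_factor (2 ^ n * q) (2 ^ n) = block i n" "tm_factor (2 ^ n * (q + 1)) (2 ^ n) = block (1 - i) n"
    "tm_factor (2 ^ n * (q + 2)) (2 ^ n) = block j n"
    "tm_factor (2 ^ n * (q + 3)) (2 ^ n) = block (1 - j) n"
    using b by (simp_all only: e m[symmetric])
  then have t: "tm q = i" "tm (q + 1) = 1 - i" "tm (q + 2) = j" "tm (q + 3) = 1 - j"
    by (simp_all only: tm_factor_aligned block_eq_block_iff)
  have "i \<le> 1" "j \<le> 1" using tm_le_1[of q] tm_le_1[of "q + 2"] by (simp_all only: t)
  then have "tm (q + 1) \<noteq> tm q" and "tm (q + 3) \<noteq> tm (q + 2)"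
    by (simp_all only: t) arith+
  then have "even q" by (rule even_if_tm_switches)
  then show ?case using m by auto
qed simp

lemma aligned_tm_factor_is_block:
  assumes "2 ^ n dvd m"
  shows "\<exists>i \<in> {0, 1}. tm_factor m (2 ^ n) = block i n"
proof -
  obtain q where "m = 2 ^ n * q" using assms by blast
  then show ?thesis using tm_factor_aligned[of n q] tm_0_or_1[of q] by auto
qed

lemma tm_5: "tm 5 = 0" and tm_6: "tm 6 = 0"
proof -
  have "tm 1 = 1" using tm_pow_add[of 0 0] by simp
  then have "tm 2 = 1" "tm 3 = 0" using tm_double[of 1] by simp_all
  then show "tm 5 = 0" "tm 6 = 0" using tm_double[of 2] tm_double[of 3] by simp_all
qed

text \<open>Around position \<open>6 \<cdot> 2^N\<close> the one-sided sequence reproduces the centre of the two-sided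
  one: \<open>tm 5 = tm 6 = 0\<close>, and for even \<open>N\<close> the reflection of the preceding block of
  length \<open>2^N\<close> preserves \<open>tm\<close>.\<close>

lemma tmZ_eq_tm_shift:
  assumes "even N" and "- (2 ^ N) \<le> x" and "x < 2 ^ N"
  shows "tmZ x = tm (nat (6 * 2 ^ N + x))"
proof (cases "x \<ge> 0")
  case True
  have x: "nat x < 2 ^ N" using assms(3) True by (simp add: nat_less_iff)
  have "nat (6 * 2 ^ N + x) = 2 ^ N * 6 + nat x"
    using True by (simp add: nat_add_distrib nat_mult_distrib nat_power_eq)
  then have "tm (nat (6 * 2 ^ N + x)) = (tm 6 + tm (nat x)) mod 2"
    using tm_mult_pow_add[OF x] by simp
  then show ?thesis using True tm_6 tm_le_1[of "nat x"] by (simp add: tmZ_def)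
next
  case False
  define j where "j = nat (- x - 1)"
  have j: "int j = - x - 1" "j < 2 ^ N" using False assms(2) j_def by (auto simp: nat_less_iff)
  have "nat (6 * 2 ^ N + x) = 2 ^ N * 5 + (2 ^ N - 1 - j)"
    using j assms(2) by (simp add: of_nat_diff nat_eq_iff)
  then have "tm (nat (6 * 2 ^ N + x)) = (N + tm j) mod 2"
    using tm_mult_pow_add[of "2 ^ N - 1 - j" N 5] j(2) tm_5 tm_reflect by simp
  also have "\<dots> = tm j" using assms(1) tm_0_or_1[of j] by (auto elim!: evenE)
  finally show ?thesis using False j_def by (simp add: tmZ_def)
qed

lemma tm_language_factor:
  assumes "w \<in> tm_language"
    and "length w = l"
  shows "\<exists>m. tm_factor m l = w"
proof -
  obtain a b where w: "w = map tmZ [a..b]" "a \<le> b"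
    using assms unfolding tm_language_def by blast
  define N where "N = 2 * (nat \<bar>a\<bar> + nat \<bar>b\<bar>)"
  have "nat \<bar>a\<bar> \<le> N" "nat \<bar>b\<bar> \<le> N" unfolding N_def by simp_all
  then have "nat \<bar>a\<bar> < 2 ^ N" "nat \<bar>b\<bar> < 2 ^ N" using less_exp[of N] by linarith+
  then have ab: "\<bar>a\<bar> < 2 ^ N" "\<bar>b\<bar> < 2 ^ N" by (simp_all add: nat_less_iff)
  have "even N" unfolding N_def by simp
  define m where "m = nat (6 * 2 ^ N + a)"
  have "w ! k = tm_factor m (length w) ! k" if k: "k < length w" for k
  proof -
    have kb: "a + int k \<le> b" using w k by simp
    have "w ! k = tmZ (a + int k)" using w kb k by simp
    also have "\<dots> = tm (nat (6 * 2 ^ N + (a + int k)))"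
      by (rule tmZ_eq_tm_shift) (use \<open>even N\<close> ab kb in auto)
    also have "nat (6 * 2 ^ N + (a + int k)) = m + k" unfolding m_def using ab by auto
    finally show ?thesis using k by (simp add: tm_factor_def)
  qed
  then show ?thesis using assms(2) by (intro exI[of _ m] nth_equalityI) (simp_all add: tm_factor_def)
qed

theorem lemma3p3:
  fixes n :: nat and \<alpha> :: "nat list"
  assumes "set \<alpha> \<subseteq> {0, 1}"
    and "length \<alpha> = 2 ^ n"
    and "\<exists>i1 \<in> {0, 1}. \<exists>i2 \<in> {0, 1}.
           block i1 n @ block i2 n @ \<alpha> \<in> tm_language
         \<or> \<alpha> @ block i1 n @ block i2 n \<in> tm_language"
  shows "\<exists>i \<in> {0, 1}. \<alpha> = block i n"
proof -
  from assms(3) obtain i1 i2 where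
    "block i1 n @ block i2 n @ \<alpha> \<in> tm_language \<or> \<alpha> @ block i1 n @ block i2 n \<in> tm_language"
    by blast
  then obtain m where
    "tm_factor m (2 ^ n + (2 ^ n + 2 ^ n)) = block i1 n @ block i2 n @ \<alpha> \<or>
     tm_factor m (2 ^ n + (2 ^ n + 2 ^ n)) = \<alpha> @ block i1 n @ block i2 n"
    using tm_language_factor[of _ "2 ^ n + (2 ^ n + 2 ^ n)"] assms(2) by fastforce
  then show ?thesis
  proof
    assume "tm_factor m (2 ^ n + (2 ^ n + 2 ^ n)) = block i1 n @ block i2 n @ \<alpha>"
    then have blocks: "tm_factor m (2 ^ n) = block i1 n" "tm_factor (m + 2 ^ n) (2 ^ n) = block i2 n"
      and \<alpha>: "tm_factor (m + 2 ^ n + 2 ^ n) (2 ^ n) = \<alpha>"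
      by (simp_all add: tm_factor_eq_append3_iff assms(2))
    from blocks have "2 ^ n dvd m" by (rule two_blocks_aligned)
    then have "2 ^ n dvd m + 2 ^ n + 2 ^ n" by simp
    then show ?thesis using aligned_tm_factor_is_block \<alpha> by blast
  next
    assume "tm_factor m (2 ^ n + (2 ^ n + 2 ^ n)) = \<alpha> @ block i1 n @ block i2 n"
    then have \<alpha>: "tm_factor m (2 ^ n) = \<alpha>" and blocks: "tm_factor (m + 2 ^ n) (2 ^ n) = block i1 n"
      "tm_factor (m + 2 ^ n + 2 ^ n) (2 ^ n) = block i2 n"
      by (simp_all add: tm_factor_eq_append3_iff assms(2))
    from blocks have "2 ^ n dvd m + 2 ^ n" by (rule two_blocks_aligned)
    then have "2 ^ n dvd m" by (simp add: dvd_add_left_iff)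
    then show ?thesis using aligned_tm_factor_is_block \<alpha> by blast
  qed
qed

end
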